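(* Let $\mathcal G$ be a topological $2$-group and $X$ a topological space. Let $c$ be a $\mathcal G$-valued Čech cocycle subordinate to an open cover $\mathcal U$ of $X$ and let $d$ be a $\mathcal G$-valued Čech cocycle subordinate to a refinement $\mathcal V$ of $\mathcal U$. Then any $\mathcal G$-bundle morphism $\pi_d\to\pi_c$ decomposes as a composition $\pi_d\to\pi_{c_{|\mathcal V}}\to\pi_c$ of $\mathcal G$-bundle morphisms, where $c_{|\mathcal V}$ is a restriction of $c$ to $\mathcal V$.
   Context: Topological $2$-group $\mathcal G=(\mathcal G_1\rightrightarrows\mathcal G_0)$, $\mathcal E=\mathrm{Ker}(s)$, ${}^xe=1_xe1_{x^{-1}}$. A $\mathcal G$-valued Čech cocycle subordinate to $\mathcal U=\{U_i\}_{i\in I}$ is $c=(\mathbf x,\mathbf e)$ with continuous $\mathbf x_{ij}\colon U_i\cap U_j\to\mathcal G_0$, $\mathbf e_{ijk}\colon U_i\cap U_j\cap U_k\to\mathcal E$, satisfying $t(\mathbf e_{ijk})\mathbf x_{ij}\mathbf x_{jk}=\mathbf x_{ik}$ and $\mathbf e_{ikl}\mathbf e_{ijk}=\mathbf e_{ijl}\,{}^{\mathbf x_{ij}}\mathbf e_{jkl}$. For $\mathcal V=\{V_a\}_{a\in A}$ and a refinement map $\alpha\colon A\to I$ ($V_a\subset U_{\alpha(a)}$), $c_{|\mathcal V,\alpha}$ has components $\mathbf x_{\alpha(a)\alpha(b)}$, $\mathbf e_{\alpha(a)\alpha(b)\alpha(c)}$ restricted. $\pi_c\colon P_c\to\overline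 X$ denotes the principal $\mathcal G$-bundle with objects $(u,x)_i\in\coprod_iU_i\times\mathcal G_0$, morphisms $(v,g)_{ij}\in\coprod_{i,j}(U_i\cap U_j)\times\mathcal G_1$, $s((v,g)_{ij})=(v,s(g))_i$, $t((v,g)_{ij})=(v,\mathbf x_{ij}(v)^{-1}t(g))_j$, $(v,g)_{ij}*(v,h)_{jk}=(v,\mathbf e_{ijk}(v)(g*(1_{\mathbf x_{ij}(v)}h)))_{ik}$ ($g*h=h1_{t(g)^{-1}}g$), right $\mathcal G$-action by right multiplication, projection to $X$. A $\mathcal G$-bundle morphism $\pi\to\pi'$ is a $\mathcal G$-equivariant continuous functor $f$ with $\pi'f=\pi$. *)

theory Defs
  imports "HOL-Analysis.Analysis"
begin

text \<open>The groups G0 (objects) and G1 (morphisms) of the topological 2-group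
are the (not necessarily commutative) topological groups given by the types 'g0 and 'g1
(class topological_group_add; the group law is written additively, so the paper's x y
becomes x + y, x^{-1} becomes - x, and the unit 1 becomes 0).
s, t :: G1 -> G0 are source and target, u :: G0 -> G1 is the identity map x |-> 1_x.\<close>

text \<open>Composition g * h (first g, then h) = h 1_{t(g)^{-1}} g.\<close>
definition comp2 :: "('g1::group_add \<Rightarrow> 'g0::group_add) \<Rightarrow> ('g0 \<Rightarrow> 'g1) \<Rightarrow> 'g1 \<Rightarrow> 'g1 \<Rightarrow> 'g1" where
  "comp2 t u g h = h + u (- t g) + g"

definition conj2 :: "('g0::group_add \<Rightarrow> 'g1::group_add) \<Rightarrow> 'g0 \<Rightarrow> 'g1 \<Rightarrow> 'g1" where
  "conj2 u x e = u x + e + u (- x)"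

definition top_2group ::
  "('g1::topological_group_add \<Rightarrow> 'g0::topological_group_add) \<Rightarrow> ('g1 \<Rightarrow> 'g0) \<Rightarrow> ('g0 \<Rightarrow> 'g1) \<Rightarrow> bool" where
  "top_2group s t u \<longleftrightarrow>
     continuous_on UNIV s \<and> continuous_on UNIV t \<and> continuous_on UNIV u \<and>
     (\<forall>a b. s (a + b) = s a + s b) \<and> (\<forall>a b. t (a + b) = t a + t b) \<and>
     (\<forall>x y. u (x + y) = u x + u y) \<and>
     (\<forall>x. s (u x) = x \<and> t (u x) = x) \<and>
     (\<forall>g h g' h'. s h = t g \<longrightarrow> s h' = t g' \<longrightarrow>
        comp2 t u (g + g') (h + h') = comp2 t u g h + comp2 t u g' h')"

definition open_cover :: "('i \<Rightarrow> 'x::topological_space set) \<Rightarrow> bool" where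
  "open_cover U \<longleftrightarrow> (\<forall>i. open (U i)) \<and> (\<Union>i. U i) = UNIV"

definition refines :: "('a \<Rightarrow> 'x set) \<Rightarrow> ('i \<Rightarrow> 'x set) \<Rightarrow> ('a \<Rightarrow> 'i) \<Rightarrow> bool" where
  "refines V U \<alpha> \<longleftrightarrow> (\<forall>a. V a \<subseteq> U (\<alpha> a))"

definition cech_cocycle ::
  "('g1::topological_group_add \<Rightarrow> 'g0::topological_group_add) \<Rightarrow> ('g1 \<Rightarrow> 'g0) \<Rightarrow> ('g0 \<Rightarrow> 'g1)
   \<Rightarrow> ('i \<Rightarrow> 'x::topological_space set) \<Rightarrow> ('i \<Rightarrow> 'i \<Rightarrow> 'x \<Rightarrow> 'g0) \<Rightarrow> ('i \<Rightarrow> 'i \<Rightarrow> 'i \<Rightarrow> 'x \<Rightarrow> 'g1) \<Rightarrow> bool" where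
  "cech_cocycle s t u U xx ee \<longleftrightarrow>
     (\<forall>i j. continuous_on (U i \<inter> U j) (xx i j)) \<and>
     (\<forall>i j k. continuous_on (U i \<inter> U j \<inter> U k) (ee i j k)) \<and>
     (\<forall>i j k v. v \<in> U i \<inter> U j \<inter> U k \<longrightarrow> s (ee i j k v) = 0) \<and>
     (\<forall>i j k v. v \<in> U i \<inter> U j \<inter> U k \<longrightarrow> t (ee i j k v) + xx i j v + xx j k v = xx i k v) \<and>
     (\<forall>i j k l v. v \<in> U i \<inter> U j \<inter> U k \<inter> U l \<longrightarrow>
        ee i k l v + ee i j k v = ee i j l v + conj2 u (xx i j v) (ee j k l v))"

definition restrX :: "('i \<Rightarrow> 'i \<Rightarrow> 'x \<Rightarrow> 'g0) \<Rightarrow> ('a \<Rightarrow> 'i) \<Rightarrow> 'a \<Rightarrow> 'a \<Rightarrow> 'x \<Rightarrow> 'g0" where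
  "restrX xx \<alpha> a b = xx (\<alpha> a) (\<alpha> b)"

definition restrE :: "('i \<Rightarrow> 'i \<Rightarrow> 'i \<Rightarrow> 'x \<Rightarrow> 'g1) \<Rightarrow> ('a \<Rightarrow> 'i) \<Rightarrow> 'a \<Rightarrow> 'a \<Rightarrow> 'a \<Rightarrow> 'x \<Rightarrow> 'g1" where
  "restrE ee \<alpha> a b c = ee (\<alpha> a) (\<alpha> b) (\<alpha> c)"

subsection \<open>The principal G-bundle P_c\<close>

text \<open>Objects (u,x)_i are encoded as (i,(u,x)); morphisms (v,g)_{ij} as ((i,j),(v,g)).\<close>

definition ObjP :: "('i \<Rightarrow> 'x set) \<Rightarrow> ('i \<times> ('x \<times> 'g0)) set" where
  "ObjP U = Sigma UNIV (\<lambda>i. U i \<times> UNIV)"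

definition MorP :: "('i \<Rightarrow> 'x set) \<Rightarrow> (('i \<times> 'i) \<times> ('x \<times> 'g1)) set" where
  "MorP U = Sigma UNIV (\<lambda>(i,j). (U i \<inter> U j) \<times> UNIV)"

definition ObjTop :: "('i \<Rightarrow> 'x::topological_space set) \<Rightarrow> ('i \<times> ('x \<times> 'g0::topological_space)) topology" where
  "ObjTop U = sum_topology (\<lambda>i. subtopology euclidean (U i \<times> UNIV)) UNIV"

definition MorTop :: "('i \<Rightarrow> 'x::topological_space set) \<Rightarrow> (('i \<times> 'i) \<times> ('x \<times> 'g1::topological_space)) topology" where
  "MorTop U = sum_topology (\<lambda>(i,j). subtopology euclidean ((U i \<inter> U j) \<times> UNIV)) UNIV"

definition srcP :: "('g1 \<Rightarrow> 'g0) \<Rightarrow> ('i \<times> 'i) \<times> ('x \<times> 'g1) \<Rightarrow> 'i \<times> ('x \<times> 'g0)" where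
  "srcP s m = (case m of ((i,j),(v,g)) \<Rightarrow> (i,(v, s g)))"

definition tgtP :: "('g1 \<Rightarrow> 'g0::group_add) \<Rightarrow> ('i \<Rightarrow> 'i \<Rightarrow> 'x \<Rightarrow> 'g0)
    \<Rightarrow> ('i \<times> 'i) \<times> ('x \<times> 'g1) \<Rightarrow> 'i \<times> ('x \<times> 'g0)" where
  "tgtP t xx m = (case m of ((i,j),(v,g)) \<Rightarrow> (j,(v, - xx i j v + t g)))"

text \<open>(v,g)_{ij} * (v,h)_{jk} = (v, e_{ijk}(v) (g * (1_{x_{ij}(v)} h)))_{ik}.\<close>
definition compP :: "('g1::group_add \<Rightarrow> 'g0::group_add) \<Rightarrow> ('g0 \<Rightarrow> 'g1)
    \<Rightarrow> ('i \<Rightarrow> 'i \<Rightarrow> 'x \<Rightarrow> 'g0) \<Rightarrow> ('i \<Rightarrow> 'i \<Rightarrow> 'i \<Rightarrow> 'x \<Rightarrow> 'g1)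
    \<Rightarrow> ('i \<times> 'i) \<times> ('x \<times> 'g1) \<Rightarrow> ('i \<times> 'i) \<times> ('x \<times> 'g1) \<Rightarrow> ('i \<times> 'i) \<times> ('x \<times> 'g1)" where
  "compP t u xx ee m n = (case m of ((i,j),(v,g)) \<Rightarrow> (case n of ((_,k),(_,h)) \<Rightarrow>
       ((i,k),(v, ee i j k v + comp2 t u g (u (xx i j v) + h)))))"

definition identP :: "('g1::group_add \<Rightarrow> 'g0::group_add) \<Rightarrow> ('g1 \<Rightarrow> 'g0) \<Rightarrow> ('g0 \<Rightarrow> 'g1)
    \<Rightarrow> ('i \<Rightarrow> 'x set) \<Rightarrow> ('i \<Rightarrow> 'i \<Rightarrow> 'x \<Rightarrow> 'g0) \<Rightarrow> ('i \<Rightarrow> 'i \<Rightarrow> 'i \<Rightarrow> 'x \<Rightarrow> 'g1)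
    \<Rightarrow> 'i \<times> ('x \<times> 'g0) \<Rightarrow> ('i \<times> 'i) \<times> ('x \<times> 'g1)" where
  "identP s t u U xx ee p = (THE m. m \<in> MorP U \<and> srcP s m = p \<and> tgtP t xx m = p \<and>
      (\<forall>n\<in>MorP U. srcP s n = p \<longrightarrow> compP t u xx ee m n = n) \<and>
      (\<forall>n\<in>MorP U. tgtP t xx n = p \<longrightarrow> compP t u xx ee n m = n))"

definition actO :: "'i \<times> ('x \<times> 'g0::plus) \<Rightarrow> 'g0 \<Rightarrow> 'i \<times> ('x \<times> 'g0)" where
  "actO p y = (case p of (i,(v,x)) \<Rightarrow> (i,(v, x + y)))"

definition actM :: "('i \<times> 'i) \<times> ('x \<times> 'g1::plus) \<Rightarrow> 'g1 \<Rightarrow> ('i \<times> 'i) \<times> ('x \<times> 'g1)" where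
  "actM m h = (case m of ((i,j),(v,g)) \<Rightarrow> ((i,j),(v, g + h)))"

text \<open>Projection to the discrete category X-bar (morphisms of X-bar = identities = points).\<close>
definition projO :: "'i \<times> ('x \<times> 'g0) \<Rightarrow> 'x" where
  "projO p = fst (snd p)"

definition projM :: "('i \<times> 'i) \<times> ('x \<times> 'g1) \<Rightarrow> 'x" where
  "projM m = fst (snd m)"

definition bundle_mor ::
  "('g1::topological_group_add \<Rightarrow> 'g0::topological_group_add) \<Rightarrow> ('g1 \<Rightarrow> 'g0) \<Rightarrow> ('g0 \<Rightarrow> 'g1)
   \<Rightarrow> ('a \<Rightarrow> 'x::topological_space set) \<Rightarrow> ('a \<Rightarrow> 'a \<Rightarrow> 'x \<Rightarrow> 'g0) \<Rightarrow> ('a \<Rightarrow> 'a \<Rightarrow> 'a \<Rightarrow> 'x \<Rightarrow> 'g1)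
   \<Rightarrow> ('i \<Rightarrow> 'x set) \<Rightarrow> ('i \<Rightarrow> 'i \<Rightarrow> 'x \<Rightarrow> 'g0) \<Rightarrow> ('i \<Rightarrow> 'i \<Rightarrow> 'i \<Rightarrow> 'x \<Rightarrow> 'g1)
   \<Rightarrow> ('a \<times> ('x \<times> 'g0) \<Rightarrow> 'i \<times> ('x \<times> 'g0)) \<Rightarrow> (('a \<times> 'a) \<times> ('x \<times> 'g1) \<Rightarrow> ('i \<times> 'i) \<times> ('x \<times> 'g1))
   \<Rightarrow> bool" where
  "bundle_mor s t u V dx de U cx ce f0 f1 \<longleftrightarrow>
     continuous_map (ObjTop V) (ObjTop U) f0 \<and>
     continuous_map (MorTop V) (MorTop U) f1 \<and>
     (\<forall>m\<in>MorP V. srcP s (f1 m) = f0 (srcP s m) \<and> tgtP t cx (f1 m) = f0 (tgtP t dx m)) \<and>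
     (\<forall>m\<in>MorP V. \<forall>n\<in>MorP V. tgtP t dx m = srcP s n \<longrightarrow>
        f1 (compP t u dx de m n) = compP t u cx ce (f1 m) (f1 n)) \<and>
     (\<forall>p\<in>ObjP V. f1 (identP s t u V dx de p) = identP s t u U cx ce (f0 p)) \<and>
     (\<forall>p\<in>ObjP V. \<forall>y. f0 (actO p y) = actO (f0 p) y) \<and>
     (\<forall>m\<in>MorP V. \<forall>h. f1 (actM m h) = actM (f1 m) h) \<and>
     (\<forall>p\<in>ObjP V. projO (f0 p) = projO p) \<and>
     (\<forall>m\<in>MorP V. projM (f1 m) = projM m)"

end

theory Submission
  imports Defs
begin

(* Because f is G-equivariant and lies over X, on objects it is (a, v, x) |-> (i, v, y x) where the
   chart index i = chart a v and the translation y = shift a v only depend on (a, v), and the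
   chart index is locally constant on V a.  For a refinement map alpha, the unit arrow u z of G,
   read in P_c as an arrow from chart alpha a to chart i, is an isomorphism from (alpha a, v, z)
   to (i, v, cx(alpha a, i)^-1 z).  Conjugating the evident inclusion of P_{c|V} into P_c by these
   isomorphisms gives g, and conjugating f back by them gives h with g h = f.  Functoriality of
   the conjugates is a pasting of naturality squares using associativity in P_c, together with
   the fact that transition arrows cancel; continuity holds because every formula involved is
   continuous on the open pieces where the chart index is constant. *)

section \<open>Algebra of a topological 2-group\<close>

text \<open>Normal form for the non-commutative group terms below: a + - b rather than a - b,
  and - (a + b) rewritten to - b + - a.\<close>
declare add_uminus_conv_diff [simp del]
declare minus_add [simp]

lemma additive_zero:
  fixes f :: "'a::group_add \<Rightarrow> 'b::group_add"
  assumes "\<And>a b. f (a + b) = f a + f b"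
  shows "f 0 = 0"
proof -
  have "f 0 + f 0 = f 0 + 0" using assms[of 0 0] by simp
  then show ?thesis by (rule add_left_imp_eq)
qed

lemma additive_minus:
  fixes f :: "'a::group_add \<Rightarrow> 'b::group_add"
  assumes "\<And>a b. f (a + b) = f a + f b"
  shows "f (- a) = - f a"
proof -
  have "f (- a) + f a = 0" using assms[of "- a" a] additive_zero[OF assms] by simp
  then show ?thesis by (simp add: eq_neg_iff_add_eq_0)
qed

locale two_group =
  fixes s t :: "'g1::topological_group_add \<Rightarrow> 'g0::topological_group_add" and u :: "'g0 \<Rightarrow> 'g1"
  assumes two_group: "top_2group s t u"
begin

lemma s_add [simp]: "s (a + b) = s a + s b"
  and t_add [simp]: "t (a + b) = t a + t b"
  and u_add [simp]: "u (x + y) = u x + u y"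
  and s_u [simp]: "s (u x) = x"
  and t_u [simp]: "t (u x) = x"
  using two_group unfolding top_2group_def by auto

lemma s_zero [simp]: "s 0 = 0" and t_zero [simp]: "t 0 = 0" and u_zero [simp]: "u 0 = 0"
  by (simp_all add: additive_zero)

lemma s_minus [simp]: "s (- a) = - s a"
  and t_minus [simp]: "t (- a) = - t a"
  and u_minus [simp]: "u (- x) = - u x"
  by (simp_all add: additive_minus)

lemma continuous_on_u: "continuous_on UNIV u"
  using two_group unfolding top_2group_def by auto

text \<open>The Peiffer identity: the interchange law applied to b \<circ> 1 and 1 \<circ> a.\<close>
lemma ker_s_ker_t_commute:
  assumes "s a = 0" "t b = 0"
  shows "a + b = b + a"
proof -
  have "comp2 t u (b + 0) (0 + a) = comp2 t u b 0 + comp2 t u 0 a"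
    using two_group assms unfolding top_2group_def by (metis s_zero t_zero)
  then show ?thesis using assms by (simp add: comp2_def)
qed

lemma conj_u_t_eq_conj:
  assumes "s e = 0" "s y = 0"
  shows "u (t e) + y + - u (t e) = e + y + - e"
proof -
  define k where "k = - e + u (t e)"
  have "k + y = y + k" using ker_s_ker_t_commute[OF assms(2)] by (simp add: k_def)
  then have "e + k + y + - k + - e = e + y + - e" by (simp add: add.assoc)
  then show ?thesis by (simp add: k_def add.assoc)
qed

text \<open>Arrows of the form u z serve as transition isomorphisms between charts.\<close>
lemma compP_u_right:
  assumes "- xx i j v + t k = z"
  shows "compP t u xx ee ((i,j),(v,k)) ((j',q),(v',u z)) = ((i,q),(v, ee i j q v + k))"
proof -
  have "u z = - u (xx i j v) + u (t k)" using assms by (metis u_add u_minus)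
  then show ?thesis by (simp add: compP_def comp2_def add.assoc)
qed

lemma compP_u_left:
  "compP t u xx ee ((a,p),(v,u z)) ((p',q),(v',g)) = ((a,q),(v, ee a p q v + (u (xx a p v) + g)))"
  by (simp add: compP_def comp2_def add.assoc)

lemma compP_u_left_cancel:
  assumes "compP t u xx ee ((a,p),(v,u z)) ((p',q),(v',g))
         = compP t u xx ee ((a,p),(v,u z)) ((p',q),(v',g'))"
  shows "g = g'"
  using assms by (simp add: compP_u_left)

lemma compP_u_right_cancel:
  assumes "- xx i j v + t k = z" "- xx i j v + t k' = z"
    and "compP t u xx ee ((i,j),(v,k)) ((j',q),(v',u z))
       = compP t u xx ee ((i,j),(v,k')) ((j',q),(v',u z))"
  shows "k = k'"
  using assms by (simp add: compP_u_right)

end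

section \<open>The groupoid P_c of a cocycle\<close>

lemma composable_pairE:
  assumes "tgtP t xx m = srcP s n"
  obtains a b c v g h where "m = ((a,b),(v,g))" "n = ((b,c),(v,h))" "s h = - xx a b v + t g"
  using assms by (cases m, cases n) (auto simp: tgtP_def srcP_def)

locale cocycle = two_group s t u
  for s t :: "'g1::topological_group_add \<Rightarrow> 'g0::topological_group_add" and u :: "'g0 \<Rightarrow> 'g1" +
  fixes U :: "'i \<Rightarrow> 'x::topological_space set" and xx :: "'i \<Rightarrow> 'i \<Rightarrow> 'x \<Rightarrow> 'g0"
    and ee :: "'i \<Rightarrow> 'i \<Rightarrow> 'i \<Rightarrow> 'x \<Rightarrow> 'g1"
  assumes cocycle: "cech_cocycle s t u U xx ee"
begin

lemma s_ee: "v \<in> U i \<Longrightarrow> v \<in> U j \<Longrightarrow> v \<in> U k \<Longrightarrow> s (ee i j k v) = 0"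
  using cocycle unfolding cech_cocycle_def by blast

lemma t_ee_xx:
  "v \<in> U i \<Longrightarrow> v \<in> U j \<Longrightarrow> v \<in> U k \<Longrightarrow> t (ee i j k v) + xx i j v + xx j k v = xx i k v"
  using cocycle unfolding cech_cocycle_def by blast

lemma ee_cocycle: "v \<in> U i \<Longrightarrow> v \<in> U j \<Longrightarrow> v \<in> U k \<Longrightarrow> v \<in> U l \<Longrightarrow>
    ee i k l v + ee i j k v = ee i j l v + (u (xx i j v) + ee j k l v + - u (xx i j v))"
  using cocycle unfolding cech_cocycle_def conj2_def by simp

lemma t_ee:
  assumes "v \<in> U i" "v \<in> U j" "v \<in> U k"
  shows "t (ee i j k v) = xx i k v + - xx j k v + - xx i j v"
  using t_ee_xx[OF assms, symmetric] by (simp add: add.assoc)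

lemma xx_diag: "v \<in> U i \<Longrightarrow> xx i i v = - t (ee i i i v)"
  using t_ee[of v i i i] by (simp add: add.assoc minus_unique)

lemma ee_jii: "v \<in> U i \<Longrightarrow> v \<in> U j \<Longrightarrow> ee j i i v = u (xx j i v) + ee i i i v + - u (xx j i v)"
  using ee_cocycle[of v j i i i] by simp

lemma ee_iik:
  assumes "v \<in> U i" "v \<in> U k"
  shows "ee i i k v = u (t (ee i i i v)) + ee i i i v + - u (t (ee i i i v))"
proof -
  have "ee i i i v = u (xx i i v) + ee i i k v + - u (xx i i v)"
    using ee_cocycle[of v i i i k] assms by simp
  then have "- u (xx i i v) + ee i i i v + u (xx i i v) = ee i i k v" by (simp add: add.assoc)
  then show ?thesis using xx_diag[OF assms(1)] by simp
qed

definition unit_val :: "'i \<Rightarrow> 'x \<Rightarrow> 'g0 \<Rightarrow> 'g1" where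
  "unit_val i v x = - u (xx i i v) + - ee i i i v + u (xx i i v + x)"

lemma s_unit_val: "v \<in> U i \<Longrightarrow> s (unit_val i v x) = x"
  by (simp add: unit_val_def s_ee)

lemma t_unit_val: "v \<in> U i \<Longrightarrow> - xx i i v + t (unit_val i v x) = x"
  by (simp add: unit_val_def xx_diag add.assoc)

lemma compP_unit_left:
  assumes v: "v \<in> U i" "v \<in> U k" and "s h = x"
  shows "compP t u xx ee ((i,i),(v, unit_val i v x)) ((i',k),(v',h)) = ((i,k),(v,h))"
proof -
  define E where "E = ee i i i v"
  define a where "a = u (t E)"
  define p where "p = - a + (h + - u x) + a"
  have "s p = 0" by (simp add: p_def a_def assms)
  then have comm: "(E + - a) + p = p + (E + - a)"
    using ker_s_ker_t_commute[of p "E + - a"] by (simp add: a_def)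
  have xii: "xx i i v = - t E" using xx_diag[OF v(1)] by (simp add: E_def)
  have eiik: "ee i i k v = a + E + - a" using ee_iik[OF v] by (simp add: E_def a_def)
  have unit: "unit_val i v x = a + - E + (- a + u x)" by (simp add: unit_val_def xii a_def E_def)
  have tunit: "u (t (unit_val i v x)) = - a + u x" by (simp add: unit a_def add.assoc)
  have "ee i i k v + (u (xx i i v) + h + - u (t (unit_val i v x)) + unit_val i v x)
      = a + ((E + - a) + p) + ((a + - E) + (- a + u x))"
    by (simp add: eiik xii tunit unit a_def p_def add.assoc)
  also have "\<dots> = a + (p + (E + - a)) + ((a + - E) + (- a + u x))" by (simp add: comm)
  also have "\<dots> = h" by (simp add: p_def add.assoc)
  finally show ?thesis by (simp add: compP_def comp2_def)
qed

lemma compP_unit_right: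
  assumes v: "v \<in> U i" "v \<in> U j" and "- xx j i v + t h = x"
  shows "compP t u xx ee ((j,i),(v,h)) ((i',i),(v', unit_val i v x)) = ((j,i),(v,h))"
proof -
  define E where "E = ee i i i v"
  define a where "a = u (t E)"
  have "s E = 0" using s_ee v by (simp add: E_def)
  then have "a + E + - a = E" using conj_u_t_eq_conj by (simp add: a_def add.assoc)
  moreover have "a + E = (a + E + - a) + a" by (simp add: add.assoc)
  ultimately have comm: "E + a = a + E" by simp
  have xii: "xx i i v = - t E" using xx_diag[OF v(1)] by (simp add: E_def)
  have ejii: "ee j i i v = u (xx j i v) + E + - u (xx j i v)" using ee_jii[OF v] by (simp add: E_def)
  have unit: "unit_val i v x = a + - E + (- a + u x)" by (simp add: unit_val_def xii a_def E_def)
  have ux: "u x = - u (xx j i v) + u (t h)" using assms(3) by (metis u_add u_minus)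
  have "ee j i i v + (u (xx j i v) + unit_val i v x + - u (t h) + h)
      = u (xx j i v) + (E + a) + - E + - a + - u (xx j i v) + h"
    by (simp add: ejii unit ux add.assoc)
  also have "\<dots> = h" by (simp add: comm add.assoc)
  finally show ?thesis by (simp add: compP_def comp2_def)
qed

lemma compP_idempotent:
  assumes "compP t u xx ee ((i,i),(v,g)) ((i,i),(v,g)) = ((i,i),(v,g))"
    and "- xx i i v + t g = x"
  shows "g = unit_val i v x"
proof -
  have "ee i i i v + (u (xx i i v) + g + - u (t g) + g) = g"
    using assms(1) by (simp add: compP_def comp2_def)
  then have "ee i i i v + u (xx i i v) + g + - u (t g) = 0"
    by (metis add.assoc add_right_cancel add_0_left)
  then have "g = - u (xx i i v) + - ee i i i v + u (t g)"
    by (metis add.assoc add_minus_cancel minus_add_cancel add_0_right add_right_imp_eq add.left_inverse)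
  moreover have "t g = xx i i v + x" using assms(2) by (metis add_minus_cancel)
  ultimately show ?thesis by (simp add: unit_val_def)
qed

lemma identP_eq:
  assumes v: "v \<in> U i"
  shows "identP s t u U xx ee (i,(v,x)) = ((i,i),(v, unit_val i v x))"
  unfolding identP_def
proof (rule the_equality, intro conjI ballI impI)
  show "((i,i),(v, unit_val i v x)) \<in> MorP U" using v by (simp add: MorP_def)
  show "srcP s ((i,i),(v, unit_val i v x)) = (i,(v,x))" using v by (simp add: srcP_def s_unit_val)
  show "tgtP t xx ((i,i),(v, unit_val i v x)) = (i,(v,x))" using v by (simp add: tgtP_def t_unit_val)
  fix n :: "('i \<times> 'i) \<times> 'x \<times> 'g1" assume n: "n \<in> MorP U"
  obtain i' k v' h where ne: "n = ((i',k),(v',h))" by (metis prod.collapse)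
  show "compP t u xx ee ((i,i),(v, unit_val i v x)) n = n" if "srcP s n = (i,(v,x))"
    using that compP_unit_left n v by (auto simp: ne srcP_def MorP_def)
  show "compP t u xx ee n ((i,i),(v, unit_val i v x)) = n" if "tgtP t xx n = (i,(v,x))"
    using that compP_unit_right n v by (auto simp: ne tgtP_def MorP_def)
next
  fix m :: "('i \<times> 'i) \<times> 'x \<times> 'g1"
  assume m: "m \<in> MorP U \<and> srcP s m = (i,(v,x)) \<and> tgtP t xx m = (i,(v,x)) \<and>
       (\<forall>n\<in>MorP U. srcP s n = (i,(v,x)) \<longrightarrow> compP t u xx ee m n = n) \<and>
       (\<forall>n\<in>MorP U. tgtP t xx n = (i,(v,x)) \<longrightarrow> compP t u xx ee n m = n)"
  obtain i' k v' g where me: "m = ((i',k),(v',g))" by (metis prod.collapse)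
  have eqs: "i' = i" "v' = v" "k = i" "- xx i i v + t g = x"
    using m by (auto simp: me srcP_def tgtP_def)
  have "compP t u xx ee m m = m" using m by blast
  then show "m = ((i,i),(v, unit_val i v x))"
    using compP_idempotent eqs by (simp add: me)
qed

lemma compP_assoc:
  assumes v: "v \<in> U i" "v \<in> U j" "v \<in> U k" "v \<in> U l" and sw: "s w = - xx j k v + t h"
  shows "compP t u xx ee (compP t u xx ee ((i,j),(v,g)) ((j,k),(v',h))) ((k,l),(v'',w))
       = compP t u xx ee ((i,j),(v,g)) (compP t u xx ee ((j,k),(v,h)) ((k,l),(v'',w)))"
proof -
  define E where "E = ee i j k v"
  define a where "a = u (t E)"
  define X where "X = u (xx i j v)"
  define W where "W = u (xx j k v) + w + - u (t h)"
  define Y where "Y = X + W + - X"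
  have "s E = 0" using s_ee v by (simp add: E_def)
  moreover have "s Y = 0" by (simp add: Y_def X_def W_def sw)
  ultimately have conj: "a + Y + - a = E + Y + - E" using conj_u_t_eq_conj by (simp add: a_def)
  have c4: "ee i j l v + X + ee j k l v = ee i k l v + E + X"
    using ee_cocycle[OF v] by (simp add: E_def X_def add.assoc)
  define G where "G = ee i j k v + (u (xx i j v) + h + - u (t g) + g)"
  have "xx i k v = t E + xx i j v + xx j k v" using t_ee_xx[OF v(1-3)] by (simp add: E_def)
  then have uxik: "u (xx i k v) = a + X + u (xx j k v)" by (simp add: a_def X_def)
  have "ee i k l v + (u (xx i k v) + w + - u (t G) + G)
      = ee i k l v + (a + Y + - a) + (E + X + h + - u (t g) + g)"
    by (simp add: uxik Y_def W_def G_def E_def X_def a_def add.assoc)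
  also have "\<dots> = ee i k l v + (E + Y + - E) + (E + X + h + - u (t g) + g)" by (simp only: conj)
  also have "\<dots> = (ee i k l v + E + X) + (W + (h + - u (t g) + g))" by (simp add: Y_def add.assoc)
  also have "\<dots> = (ee i j l v + X + ee j k l v) + (W + (h + - u (t g) + g))" by (simp only: c4)
  also have "\<dots> = ee i j l v + (u (xx i j v) + (ee j k l v + (u (xx j k v) + w + - u (t h) + h))
                    + - u (t g) + g)"
    by (simp add: W_def X_def add.assoc)
  finally show ?thesis by (simp add: compP_def comp2_def G_def)
qed

lemma compP_src_tgt:
  assumes v: "v \<in> U i" "v \<in> U j" "v \<in> U k" and sh: "s h = - xx i j v + t g"
  shows "srcP s (compP t u xx ee ((i,j),(v,g)) ((j,k),(v',h))) = srcP s ((i,j),(v,g))"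
    and "tgtP t xx (compP t u xx ee ((i,j),(v,g)) ((j,k),(v',h))) = tgtP t xx ((j,k),(v,h))"
  using s_ee[OF v] t_ee_xx[OF v, symmetric]
  by (simp_all add: compP_def comp2_def srcP_def tgtP_def sh add.assoc)

text \<open>Pasting two commutative squares along the middle arrow.\<close>
lemma compP_paste_squares:
  assumes v: "v \<in> U A" "v \<in> U B" "v \<in> U C" "v \<in> U P" "v \<in> U Q" "v \<in> U R"
    and c1: "s \<tau>C = - xx B C v + t k2" and c2: "s G2 = - xx B Q v + t \<tau>B"
    and c3: "s G2 = - xx P Q v + t G1"
    and sq1: "compP t u xx ee ((A,B),(v,k1)) ((B,Q),(v,\<tau>B))
            = compP t u xx ee ((A,P),(v,\<tau>A)) ((P,Q),(v,G1))"
    and sq2: "compP t u xx ee ((B,C),(v,k2)) ((C,R),(v,\<tau>C))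
            = compP t u xx ee ((B,Q),(v,\<tau>B)) ((Q,R),(v,G2))"
  shows "compP t u xx ee (compP t u xx ee ((A,B),(v,k1)) ((B,C),(v,k2))) ((C,R),(v,\<tau>C))
       = compP t u xx ee ((A,P),(v,\<tau>A)) (compP t u xx ee ((P,Q),(v,G1)) ((Q,R),(v,G2)))"
proof -
  have "compP t u xx ee (compP t u xx ee ((A,B),(v,k1)) ((B,C),(v,k2))) ((C,R),(v,\<tau>C))
      = compP t u xx ee ((A,B),(v,k1)) (compP t u xx ee ((B,Q),(v,\<tau>B)) ((Q,R),(v,G2)))"
    using compP_assoc[OF v(1-3,6) c1] by (simp add: sq2)
  also have "\<dots> = compP t u xx ee (compP t u xx ee ((A,B),(v,k1)) ((B,Q),(v,\<tau>B))) ((Q,R),(v,G2))"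
    using compP_assoc[OF v(1,2,5,6) c2] by simp
  also have "\<dots> = compP t u xx ee ((A,P),(v,\<tau>A)) (compP t u xx ee ((P,Q),(v,G1)) ((Q,R),(v,G2)))"
    using compP_assoc[OF v(1,4,5,6) c3] by (simp add: sq1)
  finally show ?thesis .
qed

end

section \<open>Coproduct topologies\<close>

lemma openin_sum_topology_slice:
  fixes B :: "'b \<Rightarrow> 'z::topological_space set"
  assumes "open W"
  shows "openin (sum_topology (\<lambda>b. top_of_set (B b)) UNIV) ({j} \<times> (B j \<inter> W))"
  unfolding openin_sum_topology
proof (intro conjI ballI)
  fix j' :: 'b
  have "{x. (j', x) \<in> {j} \<times> (B j \<inter> W)} = (if j' = j then B j' \<inter> W else {})" by auto
  then show "openin (top_of_set (B j')) {x. (j', x) \<in> {j} \<times> (B j \<inter> W)}"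
    using assms by auto
qed auto

lemma continuous_map_sum_topology_fibre:
  fixes A :: "'a \<Rightarrow> 'w::topological_space set" and B :: "'b \<Rightarrow> 'z::topological_space set"
  assumes \<phi>: "continuous_map (sum_topology (\<lambda>a. top_of_set (A a)) UNIV)
                (sum_topology (\<lambda>b. top_of_set (B b)) UNIV) \<phi>"
    and "open (A a)"
  shows "open {w \<in> A a. fst (\<phi> (a,w)) = j}"
    and "continuous_on {w \<in> A a. fst (\<phi> (a,w)) = j} (\<lambda>w. snd (\<phi> (a,w)))"
proof -
  have cp: "continuous_map (top_of_set (A a)) (sum_topology (\<lambda>b. top_of_set (B b)) UNIV) (\<lambda>w. \<phi> (a,w))"
    using continuous_map_compose[OF continuous_map_component_injection \<phi>] by (simp add: o_def)
  have in_B: "\<phi> (a,w) \<in> Sigma UNIV B" if "w \<in> A a" for w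
    using cp that unfolding continuous_map_def by (force simp: Pi_def)
  have "\<phi> (a,w) \<in> {j} \<times> (B j \<inter> W) \<longleftrightarrow> fst (\<phi> (a,w)) = j \<and> snd (\<phi> (a,w)) \<in> W"
    if "w \<in> A a" for w W
    using in_B[OF that] by (cases "\<phi> (a,w)") auto
  then have eq: "{w \<in> topspace (top_of_set (A a)). \<phi> (a,w) \<in> {j} \<times> (B j \<inter> W)}
      = {w \<in> A a. fst (\<phi> (a,w)) = j \<and> snd (\<phi> (a,w)) \<in> W}" for W
    by auto
  have preimage_open: "open {w \<in> A a. fst (\<phi> (a,w)) = j \<and> snd (\<phi> (a,w)) \<in> W}" if "open W" for W
  proof (rule openin_open_trans[OF _ \<open>open (A a)\<close>])
    show "openin (top_of_set (A a)) {w \<in> A a. fst (\<phi> (a,w)) = j \<and> snd (\<phi> (a,w)) \<in> W}"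
      using openin_continuous_map_preimage[OF cp openin_sum_topology_slice[OF that, of B j]] by (simp only: eq)
  qed
  show op: "open {w \<in> A a. fst (\<phi> (a,w)) = j}"
    using preimage_open[OF open_UNIV] by simp
  show "continuous_on {w \<in> A a. fst (\<phi> (a,w)) = j} (\<lambda>w. snd (\<phi> (a,w)))"
    unfolding continuous_on_open_vimage[OF op]
  proof (intro allI impI)
    fix W :: "'z set" assume "open W"
    moreover have "(\<lambda>w. snd (\<phi> (a,w))) -` W \<inter> {w \<in> A a. fst (\<phi> (a,w)) = j}
        = {w \<in> A a. fst (\<phi> (a,w)) = j \<and> snd (\<phi> (a,w)) \<in> W}" by auto
    ultimately show "open ((\<lambda>w. snd (\<phi> (a,w))) -` W \<inter> {w \<in> A a. fst (\<phi> (a,w)) = j})"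
      using preimage_open by simp
  qed
qed

lemma continuous_map_sum_topology_piecewise:
  fixes A :: "'a \<Rightarrow> 'w::topological_space set" and B :: "'b \<Rightarrow> 'z::topological_space set"
    and k :: "'a \<Rightarrow> 'w \<Rightarrow> 'b" and F :: "'a \<Rightarrow> 'w \<Rightarrow> 'z"
  assumes op: "\<And>a j. open {w \<in> A a. k a w = j}"
    and ct: "\<And>a j. continuous_on {w \<in> A a. k a w = j} (F a)"
    and mp: "\<And>a w. w \<in> A a \<Longrightarrow> F a w \<in> B (k a w)"
  shows "continuous_map (sum_topology (\<lambda>a. top_of_set (A a)) UNIV)
            (sum_topology (\<lambda>b. top_of_set (B b)) UNIV) (\<lambda>(a,w). (k a w, F a w))"
  unfolding continuous_map_def
proof (intro conjI allI impI)
  show "(\<lambda>(a,w). (k a w, F a w)) \<in> topspace (sum_topology (\<lambda>a. top_of_set (A a)) UNIV)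
        \<rightarrow> topspace (sum_topology (\<lambda>b. top_of_set (B b)) UNIV)"
    using mp by auto
  fix Z assume "openin (sum_topology (\<lambda>b. top_of_set (B b)) UNIV) Z"
  then have "\<forall>j. \<exists>W. open W \<and> {z. (j,z) \<in> Z} = B j \<inter> W"
    by (auto simp: openin_sum_topology openin_open)
  then obtain W where W: "\<And>j. open (W j)" "\<And>j. {z. (j,z) \<in> Z} = B j \<inter> W j" by metis
  show "openin (sum_topology (\<lambda>a. top_of_set (A a)) UNIV)
          {x \<in> topspace (sum_topology (\<lambda>a. top_of_set (A a)) UNIV). (case x of (a,w) \<Rightarrow> (k a w, F a w)) \<in> Z}"
    unfolding openin_sum_topology
  proof (intro conjI ballI)
    fix a :: 'a
    have "(k a w, F a w) \<in> Z \<longleftrightarrow> F a w \<in> W (k a w)" if "w \<in> A a" for w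
      using W(2)[of "k a w"] mp[OF that] by blast
    then have eq: "{w. (a,w) \<in> {x \<in> topspace (sum_topology (\<lambda>a. top_of_set (A a)) UNIV).
                     (case x of (a,w) \<Rightarrow> (k a w, F a w)) \<in> Z}}
        = (\<Union>j. F a -` W j \<inter> {w \<in> A a. k a w = j})" by auto
    have "open (\<Union>j. F a -` W j \<inter> {w \<in> A a. k a w = j})"
      using ct op W(1) continuous_on_open_vimage by blast
    then show "openin (top_of_set (A a)) {w. (a,w) \<in> {x \<in> topspace (sum_topology (\<lambda>a. top_of_set (A a)) UNIV).
                 (case x of (a,w) \<Rightarrow> (k a w, F a w)) \<in> Z}}"
      unfolding eq by (intro open_subset) auto
  qed auto
qed

lemma ObjTop_eq: "ObjTop U = sum_topology (\<lambda>i. top_of_set (U i \<times> UNIV)) UNIV"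
  by (simp add: ObjTop_def)

lemma MorTop_eq: "MorTop U = sum_topology (\<lambda>p. top_of_set ((U (fst p) \<inter> U (snd p)) \<times> UNIV)) UNIV"
  by (simp add: MorTop_def case_prod_unfold)

lemma topspace_ObjTop: "topspace (ObjTop U) = ObjP U"
  by (auto simp: ObjTop_def ObjP_def)

lemma cech_cocycle_restr:
  assumes "cech_cocycle s t u U cx ce" and "refines V U \<alpha>"
  shows "cech_cocycle s t u V (restrX cx \<alpha>) (restrE ce \<alpha>)"
proof -
  have sub: "v \<in> V a \<Longrightarrow> v \<in> U (\<alpha> a)" for v a using assms(2) by (auto simp: refines_def)
  show ?thesis
    unfolding cech_cocycle_def restrX_def restrE_def
  proof (intro conjI allI impI)
    show "continuous_on (V a \<inter> V b) (cx (\<alpha> a) (\<alpha> b))" for a b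
      using assms(1) sub unfolding cech_cocycle_def by (meson IntE IntI continuous_on_subset subsetI)
    show "continuous_on (V a \<inter> V b \<inter> V c) (ce (\<alpha> a) (\<alpha> b) (\<alpha> c))" for a b c
      using assms(1) sub unfolding cech_cocycle_def by (meson IntE IntI continuous_on_subset subsetI)
  qed (use assms(1) sub in \<open>auto simp: cech_cocycle_def\<close>)
qed

section \<open>Factoring a bundle morphism through the restricted cocycle\<close>

locale refined_bundle_mor = two_group s t u
  for s t :: "'g1::topological_group_add \<Rightarrow> 'g0::topological_group_add" and u :: "'g0 \<Rightarrow> 'g1" +
  fixes U :: "'i \<Rightarrow> 'x::topological_space set" and V :: "'a \<Rightarrow> 'x set"
    and cx :: "'i \<Rightarrow> 'i \<Rightarrow> 'x \<Rightarrow> 'g0" and ce :: "'i \<Rightarrow> 'i \<Rightarrow> 'i \<Rightarrow> 'x \<Rightarrow> 'g1"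
    and dx :: "'a \<Rightarrow> 'a \<Rightarrow> 'x \<Rightarrow> 'g0" and de :: "'a \<Rightarrow> 'a \<Rightarrow> 'a \<Rightarrow> 'x \<Rightarrow> 'g1"
    and f0 :: "'a \<times> ('x \<times> 'g0) \<Rightarrow> 'i \<times> ('x \<times> 'g0)"
    and f1 :: "('a \<times> 'a) \<times> ('x \<times> 'g1) \<Rightarrow> ('i \<times> 'i) \<times> ('x \<times> 'g1)"
    and \<alpha> :: "'a \<Rightarrow> 'i"
  assumes open_cover_V: "open_cover V" and refines: "refines V U \<alpha>"
    and cocycle_c: "cech_cocycle s t u U cx ce" and cocycle_d: "cech_cocycle s t u V dx de"
    and bundle_mor_f: "bundle_mor s t u V dx de U cx ce f0 f1"

sublocale refined_bundle_mor \<subseteq> c: cocycle s t u U cx ce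
  by unfold_locales (rule cocycle_c)

sublocale refined_bundle_mor \<subseteq> d: cocycle s t u V dx de
  by unfold_locales (rule cocycle_d)

sublocale refined_bundle_mor \<subseteq> c_restr: cocycle s t u V "restrX cx \<alpha>" "restrE ce \<alpha>"
  by unfold_locales (rule cech_cocycle_restr[OF cocycle_c refines])

context refined_bundle_mor
begin

lemma mem_U_\<alpha>: "v \<in> V a \<Longrightarrow> v \<in> U (\<alpha> a)"
  using refines by (auto simp: refines_def)

lemma open_V: "open (V a)"
  using open_cover_V by (simp add: open_cover_def)

lemma f_continuous: "continuous_map (ObjTop V) (ObjTop U) f0" "continuous_map (MorTop V) (MorTop U) f1"
  using bundle_mor_f by (simp_all add: bundle_mor_def)

lemma f_functor:
  "m \<in> MorP V \<Longrightarrow> srcP s (f1 m) = f0 (srcP s m)"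
  "m \<in> MorP V \<Longrightarrow> tgtP t cx (f1 m) = f0 (tgtP t dx m)"
  "m \<in> MorP V \<Longrightarrow> n \<in> MorP V \<Longrightarrow> tgtP t dx m = srcP s n \<Longrightarrow>
     f1 (compP t u dx de m n) = compP t u cx ce (f1 m) (f1 n)"
  "p \<in> ObjP V \<Longrightarrow> f1 (identP s t u V dx de p) = identP s t u U cx ce (f0 p)"
  using bundle_mor_f by (simp_all add: bundle_mor_def)

lemma f_equivariant:
  "p \<in> ObjP V \<Longrightarrow> f0 (actO p y) = actO (f0 p) y"
  "m \<in> MorP V \<Longrightarrow> f1 (actM m h) = actM (f1 m) h"
  using bundle_mor_f by (simp_all add: bundle_mor_def)

lemma f_over_X: "p \<in> ObjP V \<Longrightarrow> projO (f0 p) = projO p" "m \<in> MorP V \<Longrightarrow> projM (f1 m) = projM m"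
  using bundle_mor_f by (simp_all add: bundle_mor_def)

lemma f0_ObjP: "p \<in> ObjP V \<Longrightarrow> f0 p \<in> ObjP U"
  using f_continuous(1) unfolding continuous_map_def topspace_ObjTop by auto

text \<open>Being equivariant and over X, f is determined on objects by the chart index and the
  G0-translation it applies to the points (a, v, 0).\<close>
definition chart :: "'a \<Rightarrow> 'x \<Rightarrow> 'i" where
  "chart a v = fst (f0 (a,(v,0)))"

definition shift :: "'a \<Rightarrow> 'x \<Rightarrow> 'g0" where
  "shift a v = snd (snd (f0 (a,(v,0))))"

definition f1_val :: "('a \<times> 'a) \<times> ('x \<times> 'g1) \<Rightarrow> 'g1" where
  "f1_val m = snd (snd (f1 m))"

lemma f0_eq:
  assumes "v \<in> V a"
  shows "f0 (a,(v,x)) = (chart a v, (v, shift a v + x))"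
proof -
  have p0: "(a,(v,0)) \<in> ObjP V" using assms by (simp add: ObjP_def)
  obtain i v' y where e: "f0 (a,(v,0)) = (i,(v',y))" by (metis prod.collapse)
  have "v' = v" using f_over_X(1)[OF p0] by (simp add: e projO_def)
  moreover have "f0 (actO (a,(v,0)) x) = actO (f0 (a,(v,0))) x" using f_equivariant(1)[OF p0] .
  ultimately show ?thesis by (simp add: actO_def e chart_def shift_def)
qed

lemma mem_U_chart:
  assumes "v \<in> V a"
  shows "v \<in> U (chart a v)"
proof -
  have "f0 (a,(v,0)) \<in> ObjP U" using assms by (intro f0_ObjP) (simp add: ObjP_def)
  then show ?thesis using f0_eq[OF assms, of 0] by (simp add: ObjP_def)
qed

lemma f1_eq:
  assumes m: "((a,b),(v,g)) \<in> MorP V"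
  shows "f1 ((a,b),(v,g)) = ((chart a v, chart b v),(v, f1_val ((a,b),(v,g))))"
    and "s (f1_val ((a,b),(v,g))) = shift a v + s g"
    and "- cx (chart a v) (chart b v) v + t (f1_val ((a,b),(v,g))) = shift b v + (- dx a b v + t g)"
proof -
  have va: "v \<in> V a" and vb: "v \<in> V b" using m by (auto simp: MorP_def)
  obtain P Q v' k where e: "f1 ((a,b),(v,g)) = ((P,Q),(v',k))" by (metis prod.collapse)
  have "v' = v" using f_over_X(2)[OF m] by (simp add: e projM_def)
  then have "P = chart a v" "k = f1_val ((a,b),(v,g))" "s k = shift a v + s g"
    and "Q = chart b v" "- cx P Q v + t k = shift b v + (- dx a b v + t g)"
    using f_functor(1,2)[OF m]
    by (auto simp: e srcP_def tgtP_def f0_eq[OF va] f0_eq[OF vb] f1_val_def)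
  then show "f1 ((a,b),(v,g)) = ((chart a v, chart b v),(v, f1_val ((a,b),(v,g))))"
    and "s (f1_val ((a,b),(v,g))) = shift a v + s g"
    and "- cx (chart a v) (chart b v) v + t (f1_val ((a,b),(v,g))) = shift b v + (- dx a b v + t g)"
    using \<open>v' = v\<close> by (simp_all add: e)
qed

text \<open>The arrow ((\<alpha> a, chart a v), (v, u z)) of P_c is an isomorphism from (\<alpha> a, v, z) to
  g0 (a, v, z); g1 is the inclusion of P_{c|V} into P_c conjugated by these isomorphisms, and h1
  is f1 conjugated back by them, so that g1 \<circ> h1 = f1.  The formulas below solve the
  conjugations explicitly.\<close>
definition h0 :: "'a \<times> ('x \<times> 'g0) \<Rightarrow> 'a \<times> ('x \<times> 'g0)" where
  "h0 = (\<lambda>(a,w). (a, (fst w, cx (\<alpha> a) (chart a (fst w)) (fst w) + snd (snd (f0 (a,w))))))"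

definition h0_val :: "'a \<Rightarrow> 'x \<Rightarrow> 'g0 \<Rightarrow> 'g0" where
  "h0_val a v x = cx (\<alpha> a) (chart a v) v + (shift a v + x)"

definition h1_shift :: "'a \<times> 'a \<Rightarrow> 'x \<Rightarrow> 'g1" where
  "h1_shift ab v = - ce (\<alpha> (fst ab)) (\<alpha> (snd ab)) (chart (snd ab) v) v
      + ce (\<alpha> (fst ab)) (chart (fst ab) v) (chart (snd ab) v) v + u (cx (\<alpha> (fst ab)) (chart (fst ab) v) v)"

definition h1 :: "('a \<times> 'a) \<times> ('x \<times> 'g1) \<Rightarrow> ('a \<times> 'a) \<times> ('x \<times> 'g1)" where
  "h1 = (\<lambda>(ab,w). (ab, (fst w, h1_shift ab (fst w) + snd (snd (f1 (ab,w))))))"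

definition g0 :: "'a \<times> ('x \<times> 'g0) \<Rightarrow> 'i \<times> ('x \<times> 'g0)" where
  "g0 = (\<lambda>(a,w). (chart a (fst w), (fst w, - cx (\<alpha> a) (chart a (fst w)) (fst w) + snd w)))"

definition g1_shift :: "'a \<times> 'a \<Rightarrow> 'x \<Rightarrow> 'g1" where
  "g1_shift ab v = - u (cx (\<alpha> (fst ab)) (chart (fst ab) v) v)
      + - ce (\<alpha> (fst ab)) (chart (fst ab) v) (chart (snd ab) v) v + ce (\<alpha> (fst ab)) (\<alpha> (snd ab)) (chart (snd ab) v) v"

definition g1 :: "('a \<times> 'a) \<times> ('x \<times> 'g1) \<Rightarrow> ('i \<times> 'i) \<times> ('x \<times> 'g1)" where
  "g1 = (\<lambda>(ab,w). ((chart (fst ab) (fst w), chart (snd ab) (fst w)), (fst w, g1_shift ab (fst w) + snd w)))"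

lemma h0_eq: "v \<in> V a \<Longrightarrow> h0 (a,(v,x)) = (a,(v, h0_val a v x))"
  by (simp add: h0_def h0_val_def f0_eq)

lemma h1_eq: "h1 ((a,b),(v,g)) = ((a,b),(v, - ce (\<alpha> a) (\<alpha> b) (chart b v) v
      + ce (\<alpha> a) (chart a v) (chart b v) v + u (cx (\<alpha> a) (chart a v) v) + f1_val ((a,b),(v,g))))"
  by (simp add: h1_def h1_shift_def f1_val_def add.assoc)

lemma g0_eq: "g0 (a,(v,z)) = (chart a v, (v, - cx (\<alpha> a) (chart a v) v + z))"
  by (simp add: g0_def)

lemma g1_eq: "g1 ((a,b),(v,k)) = ((chart a v, chart b v), (v, - u (cx (\<alpha> a) (chart a v) v)
      + - ce (\<alpha> a) (chart a v) (chart b v) v + ce (\<alpha> a) (\<alpha> b) (chart b v) v + k))"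
  by (simp add: g1_def g1_shift_def add.assoc)

lemma f0_eq_g0_h0: "p \<in> ObjP V \<Longrightarrow> f0 p = g0 (h0 p)"
  by (auto simp: ObjP_def h0_eq g0_eq h0_val_def f0_eq add.assoc)

lemma f1_eq_g1_h1: "m \<in> MorP V \<Longrightarrow> f1 m = g1 (h1 m)"
  by (cases m) (auto simp: f1_eq(1) h1_eq g1_eq add.assoc)

lemma h1_src_tgt:
  assumes m: "((a,b),(v,g)) \<in> MorP V"
  shows "srcP s (h1 ((a,b),(v,g))) = h0 (srcP s ((a,b),(v,g)))"
    and "tgtP t (restrX cx \<alpha>) (h1 ((a,b),(v,g))) = h0 (tgtP t dx ((a,b),(v,g)))"
proof -
  have va: "v \<in> V a" and vb: "v \<in> V b" using m by (auto simp: MorP_def)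
  note vs = mem_U_\<alpha>[OF va] mem_U_\<alpha>[OF vb] mem_U_chart[OF va] mem_U_chart[OF vb]
  show "srcP s (h1 ((a,b),(v,g))) = h0 (srcP s ((a,b),(v,g)))"
    using f1_eq(2)[OF m] by (simp add: srcP_def h1_eq h0_eq h0_val_def va c.s_ee vs)
  have "t (f1_val ((a,b),(v,g))) = cx (chart a v) (chart b v) v + (shift b v + (- dx a b v + t g))"
    using f1_eq(3)[OF m] by (metis add_minus_cancel)
  then show "tgtP t (restrX cx \<alpha>) (h1 ((a,b),(v,g))) = h0 (tgtP t dx ((a,b),(v,g)))"
    by (simp add: tgtP_def restrX_def h1_eq h0_eq h0_val_def vb c.t_ee vs add.assoc)
qed

lemma g1_src_tgt:
  assumes m: "((a,b),(v,k)) \<in> MorP V"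
  shows "srcP s (g1 ((a,b),(v,k))) = g0 (srcP s ((a,b),(v,k)))"
    and "tgtP t cx (g1 ((a,b),(v,k))) = g0 (tgtP t (restrX cx \<alpha>) ((a,b),(v,k)))"
proof -
  have va: "v \<in> V a" and vb: "v \<in> V b" using m by (auto simp: MorP_def)
  note vs = mem_U_\<alpha>[OF va] mem_U_\<alpha>[OF vb] mem_U_chart[OF va] mem_U_chart[OF vb]
  show "srcP s (g1 ((a,b),(v,k))) = g0 (srcP s ((a,b),(v,k)))"
    by (simp add: srcP_def g1_eq g0_eq c.s_ee vs)
  show "tgtP t cx (g1 ((a,b),(v,k))) = g0 (tgtP t (restrX cx \<alpha>) ((a,b),(v,k)))"
    by (simp add: tgtP_def restrX_def g1_eq g0_eq c.t_ee vs add.assoc)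
qed

lemma h1_val_src_tgt:
  assumes m: "((a,b),(v,g)) \<in> MorP V" and hk: "h1 ((a,b),(v,g)) = ((a,b),(v,k))"
  shows "s k = h0_val a v (s g)" and "- cx (\<alpha> a) (\<alpha> b) v + t k = h0_val b v (- dx a b v + t g)"
  using h1_src_tgt[OF m] m
  by (auto simp: hk srcP_def tgtP_def restrX_def h0_eq MorP_def)

lemma h1_naturality:
  assumes m: "((a,b),(v,g)) \<in> MorP V" and hk: "h1 ((a,b),(v,g)) = ((a,b),(v,k))"
  shows "compP t u cx ce ((\<alpha> a, \<alpha> b),(v,k)) ((\<alpha> b, chart b v),(v, u (h0_val b v (- dx a b v + t g))))
       = compP t u cx ce ((\<alpha> a, chart a v),(v, u (h0_val a v (s g))))
           ((chart a v, chart b v),(v, f1_val ((a,b),(v,g))))"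
proof -
  have k: "k = - ce (\<alpha> a) (\<alpha> b) (chart b v) v + ce (\<alpha> a) (chart a v) (chart b v) v
      + u (cx (\<alpha> a) (chart a v) v) + f1_val ((a,b),(v,g))" using hk by (simp add: h1_eq)
  show ?thesis
    by (simp only: compP_u_right[where xx=cx, OF h1_val_src_tgt(2)[OF assms]] compP_u_left) (simp add: k add.assoc)
qed

lemma g1_naturality:
  "compP t u cx ce ((\<alpha> a, chart a v),(v, u (s k))) (g1 ((a,b),(v,k)))
     = compP t u cx ce ((\<alpha> a, \<alpha> b),(v,k)) ((\<alpha> b, chart b v),(v, u (- cx (\<alpha> a) (\<alpha> b) v + t k)))"
  by (simp only: g1_eq compP_u_right[OF refl] compP_u_left) (simp add: add.assoc)

text \<open>Paste the naturality squares of m and n, compare with the square of their composite and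
  cancel the transition arrow on the right; for g1 the arrow is cancelled on the left.\<close>
lemma h1_compP:
  assumes m: "m \<in> MorP V" and n: "n \<in> MorP V" and mn: "tgtP t dx m = srcP s n"
  shows "h1 (compP t u dx de m n) = compP t u (restrX cx \<alpha>) (restrE ce \<alpha>) (h1 m) (h1 n)"
proof -
  obtain a b c v g1 g2 where me: "m = ((a,b),(v,g1))" and ne: "n = ((b,c),(v,g2))"
    and sg2: "s g2 = - dx a b v + t g1"
    using composable_pairE[OF mn] by metis
  have va: "v \<in> V a" and vb: "v \<in> V b" and vc: "v \<in> V c" using m n by (auto simp: me ne MorP_def)
  note vs = mem_U_\<alpha>[OF va] mem_U_\<alpha>[OF vb] mem_U_\<alpha>[OF vc] mem_U_chart[OF va] mem_U_chart[OF vb] mem_U_chart[OF vc]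
  define g3 where "g3 = de a b c v + (u (dx a b v) + g2 + - u (t g1) + g1)"
  have mn_eq: "compP t u dx de m n = ((a,c),(v,g3))" by (simp add: me ne compP_def comp2_def g3_def)
  have mn_in: "((a,c),(v,g3)) \<in> MorP V" by (simp add: MorP_def va vc)
  have "s g3 = s g1" "- dx a c v + t g3 = - dx b c v + t g2"
    using d.compP_src_tgt[OF va vb vc sg2, where v'=v] by (simp_all add: mn_eq[unfolded me ne] srcP_def tgtP_def)
  note g3_src_tgt = this
  define k1 k2 k3 where "k1 = snd (snd (h1 m))" and "k2 = snd (snd (h1 n))"
    and "k3 = snd (snd (h1 ((a,c),(v,g3))))"
  have hk: "h1 m = ((a,b),(v,k1))" "h1 n = ((b,c),(v,k2))" "h1 ((a,c),(v,g3)) = ((a,c),(v,k3))"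
    by (simp_all add: me ne h1_eq k1_def k2_def k3_def)
  note h1m = h1_val_src_tgt[OF m[unfolded me] hk(1)[unfolded me]]
  note h1n = h1_val_src_tgt[OF n[unfolded ne] hk(2)[unfolded ne]]
  note h1mn = h1_val_src_tgt[OF mn_in hk(3)]
  define \<kappa> where "\<kappa> = ce (\<alpha> a) (\<alpha> b) (\<alpha> c) v + (u (cx (\<alpha> a) (\<alpha> b) v) + k2 + - u (t k1) + k1)"
  have \<kappa>: "compP t u cx ce ((\<alpha> a, \<alpha> b),(v,k1)) ((\<alpha> b, \<alpha> c),(v,k2)) = ((\<alpha> a, \<alpha> c),(v,\<kappa>))"
    by (simp add: compP_def comp2_def \<kappa>_def)
  have "compP t u cx ce (compP t u cx ce ((\<alpha> a, \<alpha> b),(v,k1)) ((\<alpha> b, \<alpha> c),(v,k2)))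
          ((\<alpha> c, chart c v),(v, u (h0_val c v (- dx b c v + t g2))))
      = compP t u cx ce ((\<alpha> a, chart a v),(v, u (h0_val a v (s g1))))
          (compP t u cx ce ((chart a v, chart b v),(v, f1_val m)) ((chart b v, chart c v),(v, f1_val n)))"
    using h1_naturality[OF m[unfolded me] hk(1)[unfolded me]] h1_naturality[OF n[unfolded ne] hk(2)[unfolded ne]]
      f1_eq(2,3)[OF m[unfolded me]] f1_eq(2)[OF n[unfolded ne]] h1n(2) vs
    by (intro c.compP_paste_squares) (simp_all add: me ne sg2 h0_val_def add.assoc)
  also have "\<dots> = compP t u cx ce ((\<alpha> a, chart a v),(v, u (h0_val a v (s g1))))
          ((chart a v, chart c v),(v, f1_val ((a,c),(v,g3))))"
    using f_functor(3)[OF m n mn] f1_eq(1)[OF mn_in] f1_eq(1)[OF m[unfolded me]] f1_eq(1)[OF n[unfolded ne]]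
    by (simp add: mn_eq[unfolded me ne] me ne)
  also have "\<dots> = compP t u cx ce ((\<alpha> a, \<alpha> c),(v,k3))
          ((\<alpha> c, chart c v),(v, u (h0_val c v (- dx b c v + t g2))))"
    using h1_naturality[OF mn_in hk(3)] by (simp add: g3_src_tgt)
  finally have square:
    "compP t u cx ce ((\<alpha> a, \<alpha> c),(v,\<kappa>)) ((\<alpha> c, chart c v),(v, u (h0_val c v (- dx b c v + t g2))))
      = compP t u cx ce ((\<alpha> a, \<alpha> c),(v,k3)) ((\<alpha> c, chart c v),(v, u (h0_val c v (- dx b c v + t g2))))"
    by (simp only: \<kappa>)
  have "- cx (\<alpha> a) (\<alpha> c) v + t \<kappa> = h0_val c v (- dx b c v + t g2)"
    using c.compP_src_tgt(2)[of v "\<alpha> a" "\<alpha> b" "\<alpha> c" k2 k1 v] h1m(2) h1n vs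
    by (simp add: \<kappa> tgtP_def sg2)
  then have "\<kappa> = k3"
    using compP_u_right_cancel[OF _ _ square] h1mn(2) by (simp add: g3_src_tgt)
  then show ?thesis
    unfolding mn_eq hk by (simp add: compP_def comp2_def restrX_def restrE_def \<kappa>_def)
qed

lemma g1_compP:
  assumes m: "m \<in> MorP V" and n: "n \<in> MorP V" and mn: "tgtP t (restrX cx \<alpha>) m = srcP s n"
  shows "g1 (compP t u (restrX cx \<alpha>) (restrE ce \<alpha>) m n) = compP t u cx ce (g1 m) (g1 n)"
proof -
  obtain a b c v k1 k2 where me: "m = ((a,b),(v,k1))" and ne: "n = ((b,c),(v,k2))"
    and sk2: "s k2 = - cx (\<alpha> a) (\<alpha> b) v + t k1"
    using composable_pairE[OF mn] unfolding restrX_def by metis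
  have va: "v \<in> V a" and vb: "v \<in> V b" and vc: "v \<in> V c" using m n by (auto simp: me ne MorP_def)
  note vs = mem_U_\<alpha>[OF va] mem_U_\<alpha>[OF vb] mem_U_\<alpha>[OF vc] mem_U_chart[OF va] mem_U_chart[OF vb] mem_U_chart[OF vc]
  define \<kappa> where "\<kappa> = ce (\<alpha> a) (\<alpha> b) (\<alpha> c) v + (u (cx (\<alpha> a) (\<alpha> b) v) + k2 + - u (t k1) + k1)"
  have mn_eq: "compP t u (restrX cx \<alpha>) (restrE ce \<alpha>) m n = ((a,c),(v,\<kappa>))"
    by (simp add: me ne compP_def comp2_def restrX_def restrE_def \<kappa>_def)
  have \<kappa>: "compP t u cx ce ((\<alpha> a, \<alpha> b),(v,k1)) ((\<alpha> b, \<alpha> c),(v,k2)) = ((\<alpha> a, \<alpha> c),(v,\<kappa>))"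
    by (simp add: compP_def comp2_def \<kappa>_def)
  have "s \<kappa> = s k1" "- cx (\<alpha> a) (\<alpha> c) v + t \<kappa> = - cx (\<alpha> b) (\<alpha> c) v + t k2"
    using c.compP_src_tgt[of v "\<alpha> a" "\<alpha> b" "\<alpha> c" k2 k1 v] vs sk2 by (simp_all add: \<kappa> srcP_def tgtP_def)
  note \<kappa>_src_tgt = this
  define w1 w2 w3 where "w1 = snd (snd (g1 m))" and "w2 = snd (snd (g1 n))"
    and "w3 = snd (snd (g1 ((a,c),(v,\<kappa>))))"
  have gw: "g1 m = ((chart a v, chart b v),(v,w1))" "g1 n = ((chart b v, chart c v),(v,w2))"
    "g1 ((a,c),(v,\<kappa>)) = ((chart a v, chart c v),(v,w3))"
    by (simp_all add: me ne g1_eq w1_def w2_def w3_def)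
  obtain \<omega> where \<omega>: "compP t u cx ce (g1 m) (g1 n) = ((chart a v, chart c v),(v,\<omega>))"
    by (simp add: gw compP_def)
  have "s w2 = - cx (\<alpha> b) (chart b v) v + s k2" "- cx (chart a v) (chart b v) v + t w1 = - cx (\<alpha> b) (chart b v) v + s k2"
    using g1_src_tgt[OF m[unfolded me]] g1_src_tgt(1)[OF n[unfolded ne]] gw
    by (simp_all add: me ne srcP_def tgtP_def g0_eq restrX_def sk2)
  note w_src_tgt = this
  have "compP t u cx ce ((\<alpha> a, chart a v),(v, u (s k1))) ((chart a v, chart c v),(v,w3))
      = compP t u cx ce (compP t u cx ce ((\<alpha> a, \<alpha> b),(v,k1)) ((\<alpha> b, \<alpha> c),(v,k2)))
          ((\<alpha> c, chart c v),(v, u (- cx (\<alpha> b) (\<alpha> c) v + t k2)))"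
    using g1_naturality[of a v \<kappa> c] by (simp add: gw \<kappa> \<kappa>_src_tgt)
  also have "\<dots> = compP t u cx ce ((\<alpha> a, chart a v),(v, u (s k1)))
          (compP t u cx ce ((chart a v, chart b v),(v,w1)) ((chart b v, chart c v),(v,w2)))"
    using g1_naturality[of a v k1 b, symmetric] g1_naturality[of b v k2 c, symmetric] vs w_src_tgt
    by (intro c.compP_paste_squares) (simp_all add: gw[unfolded me ne] sk2)
  finally have "w3 = \<omega>"
    using \<omega> by (simp add: gw compP_u_left_cancel)
  then show ?thesis unfolding mn_eq \<omega> gw(3) by simp
qed

lemma unit_val_restr: "c_restr.unit_val a v z = c.unit_val (\<alpha> a) v z"
  by (simp add: c_restr.unit_val_def c.unit_val_def restrX_def restrE_def)

lemma h1_identP: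
  assumes p: "p \<in> ObjP V"
  shows "h1 (identP s t u V dx de p) = identP s t u V (restrX cx \<alpha>) (restrE ce \<alpha>) (h0 p)"
proof -
  obtain a v x where pe: "p = (a,(v,x))" and va: "v \<in> V a" using p by (auto simp: ObjP_def)
  note vs = mem_U_\<alpha>[OF va] mem_U_chart[OF va]
  define g where "g = d.unit_val a v x"
  define z where "z = h0_val a v x"
  define k where "k = snd (snd (h1 ((a,a),(v,g))))"
  have m: "((a,a),(v,g)) \<in> MorP V" by (simp add: MorP_def va)
  have hk: "h1 ((a,a),(v,g)) = ((a,a),(v,k))" by (simp add: h1_eq k_def)
  have sg: "s g = x" and tg: "- dx a a v + t g = x"
    using d.s_unit_val[OF va] d.t_unit_val[OF va] by (simp_all add: g_def)
  have "f1 ((a,a),(v,g)) = ((chart a v, chart a v),(v, c.unit_val (chart a v) v (shift a v + x)))"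
    using f_functor(4)[OF p] by (simp add: pe g_def d.identP_eq va f0_eq c.identP_eq vs)
  then have f1_val: "f1_val ((a,a),(v,g)) = c.unit_val (chart a v) v (shift a v + x)"
    using f1_eq(1)[OF m] by simp
  have "compP t u cx ce ((\<alpha> a, \<alpha> a),(v,k)) ((\<alpha> a, chart a v),(v, u z))
      = compP t u cx ce ((\<alpha> a, chart a v),(v, u z))
          ((chart a v, chart a v),(v, c.unit_val (chart a v) v (shift a v + x)))"
    using h1_naturality[OF m hk] by (simp add: sg tg f1_val z_def)
  also have "\<dots> = ((\<alpha> a, chart a v),(v, u z))"
    using vs by (intro c.compP_unit_right) (simp_all add: z_def h0_val_def)
  also have "\<dots> = compP t u cx ce ((\<alpha> a, \<alpha> a),(v, c.unit_val (\<alpha> a) v z)) ((\<alpha> a, chart a v),(v, u z))"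
    using vs by (intro c.compP_unit_left[symmetric]) simp_all
  finally have "k = c.unit_val (\<alpha> a) v z"
    using h1_val_src_tgt(2)[OF m hk] c.t_unit_val[OF vs(1)]
    by (intro compP_u_right_cancel[where xx = cx]) (simp_all add: tg z_def)
  then show ?thesis
    by (simp add: pe d.identP_eq va hk h0_eq c_restr.identP_eq unit_val_restr flip: g_def z_def)
qed

lemma g1_identP:
  assumes p: "p \<in> ObjP V"
  shows "g1 (identP s t u V (restrX cx \<alpha>) (restrE ce \<alpha>) p) = identP s t u U cx ce (g0 p)"
proof -
  obtain a v z where pe: "p = (a,(v,z))" and va: "v \<in> V a" using p by (auto simp: ObjP_def)
  note vs = mem_U_\<alpha>[OF va] mem_U_chart[OF va]
  define k where "k = c.unit_val (\<alpha> a) v z"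
  define y where "y = - cx (\<alpha> a) (chart a v) v + z"
  define w where "w = snd (snd (g1 ((a,a),(v,k))))"
  have gw: "g1 ((a,a),(v,k)) = ((chart a v, chart a v),(v,w))" by (simp add: g1_eq w_def)
  have sk: "s k = z" and tk: "- cx (\<alpha> a) (\<alpha> a) v + t k = z"
    using c.s_unit_val[OF vs(1)] c.t_unit_val[OF vs(1)] by (simp_all add: k_def)
  have "compP t u cx ce ((\<alpha> a, chart a v),(v, u z)) ((chart a v, chart a v),(v,w))
      = compP t u cx ce ((\<alpha> a, \<alpha> a),(v,k)) ((\<alpha> a, chart a v),(v, u z))"
    using g1_naturality[of a v k a] by (simp add: gw sk tk)
  also have "\<dots> = ((\<alpha> a, chart a v),(v, u z))"
    using vs by (simp add: k_def c.compP_unit_left)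
  also have "\<dots> = compP t u cx ce ((\<alpha> a, chart a v),(v, u z))
          ((chart a v, chart a v),(v, c.unit_val (chart a v) v y))"
    using vs by (intro c.compP_unit_right[symmetric]) (simp_all add: y_def)
  finally have "w = c.unit_val (chart a v) v y" by (rule compP_u_left_cancel)
  then show ?thesis
    by (simp add: pe c_restr.identP_eq va unit_val_restr flip: k_def) (simp add: gw g0_eq c.identP_eq vs y_def)
qed

lemma h0_actO: "p \<in> ObjP V \<Longrightarrow> h0 (actO p y) = actO (h0 p) y"
  by (auto simp: ObjP_def actO_def h0_eq h0_val_def add.assoc)

lemma h1_actM:
  assumes m: "m \<in> MorP V"
  shows "h1 (actM m h) = actM (h1 m) h"
proof -
  obtain a b v g where me: "m = ((a,b),(v,g))" by (metis prod.collapse)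
  have "((a,b),(v,g + h)) \<in> MorP V" using m by (simp add: me MorP_def)
  moreover have "f1 ((a,b),(v,g + h)) = actM (f1 ((a,b),(v,g))) h"
    using f_equivariant(2)[OF m, of h] by (simp add: me actM_def)
  ultimately have "f1_val ((a,b),(v,g + h)) = f1_val ((a,b),(v,g)) + h"
    using f1_eq(1) m by (simp add: me actM_def)
  then show ?thesis by (simp add: me actM_def h1_eq add.assoc)
qed

lemma g0_actO: "g0 (actO p y) = actO (g0 p) y"
  by (cases p) (auto simp: actO_def g0_eq add.assoc)

lemma g1_actM: "g1 (actM m h) = actM (g1 m) h"
  by (cases m) (auto simp: actM_def g1_eq add.assoc)

lemma h_over_X: "projO (h0 p) = projO p" "projM (h1 m) = projM m"
  by (cases p, simp add: h0_def projO_def) (cases m, simp add: h1_def projM_def)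

lemma g_over_X: "projO (g0 p) = projO p" "projM (g1 m) = projM m"
  by (cases p, simp add: g0_def projO_def) (cases m, simp add: g1_def projM_def)

lemma continuous_on_cx_fst:
  assumes "\<And>w. w \<in> S \<Longrightarrow> fst w \<in> U i \<inter> U j"
  shows "continuous_on S (\<lambda>w. cx i j (fst w))"
proof -
  have "continuous_on (U i \<inter> U j) (cx i j)" using cocycle_c by (simp add: cech_cocycle_def)
  then show ?thesis
    by (rule continuous_on_compose2[OF _ continuous_on_fst[OF continuous_on_id]]) (use assms in auto)
qed

lemma continuous_on_ce_fst:
  assumes "\<And>w. w \<in> S \<Longrightarrow> fst w \<in> U i \<inter> U j \<inter> U k"
  shows "continuous_on S (\<lambda>w. ce i j k (fst w))"
proof -
  have "continuous_on (U i \<inter> U j \<inter> U k) (ce i j k)" using cocycle_c by (simp add: cech_cocycle_def)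
  then show ?thesis
    by (rule continuous_on_compose2[OF _ continuous_on_fst[OF continuous_on_id]]) (use assms in auto)
qed

lemma continuous_on_u_comp: "continuous_on S f \<Longrightarrow> continuous_on S (\<lambda>w. u (f w))"
  by (rule continuous_on_compose2[OF continuous_on_u]) auto

text \<open>The chart index chosen by f is locally constant: these pieces are open.\<close>
definition obj_piece :: "'a \<Rightarrow> 'i \<Rightarrow> ('x \<times> 'g0) set" where
  "obj_piece a i = {w \<in> V a \<times> UNIV. fst (f0 (a,w)) = i}"

definition mor_piece :: "'a \<times> 'a \<Rightarrow> 'i \<times> 'i \<Rightarrow> ('x \<times> 'g1) set" where
  "mor_piece ab pq = {w \<in> (V (fst ab) \<inter> V (snd ab)) \<times> UNIV. fst (f1 (ab,w)) = pq}"

lemma open_obj_piece: "open (obj_piece a i)"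
  and continuous_on_obj_piece: "continuous_on (obj_piece a i) (\<lambda>w. snd (f0 (a,w)))"
  using continuous_map_sum_topology_fibre[of "\<lambda>a. V a \<times> UNIV" "\<lambda>i. U i \<times> UNIV" f0 a i]
    f_continuous(1) open_V open_Times[OF open_V open_UNIV]
  by (auto simp: obj_piece_def ObjTop_eq)

lemma open_mor_piece: "open (mor_piece ab pq)"
  and continuous_on_mor_piece: "continuous_on (mor_piece ab pq) (\<lambda>w. snd (f1 (ab,w)))"
  using continuous_map_sum_topology_fibre[of "\<lambda>p. (V (fst p) \<inter> V (snd p)) \<times> UNIV"
      "\<lambda>p. (U (fst p) \<inter> U (snd p)) \<times> UNIV" f1 ab pq]
    f_continuous(2) open_Times[OF open_Int[OF open_V open_V] open_UNIV]
  by (auto simp: mor_piece_def MorTop_eq)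

lemma mem_obj_piece: "w \<in> obj_piece a i \<longleftrightarrow> w \<in> V a \<times> UNIV \<and> chart a (fst w) = i"
  by (cases w) (auto simp: obj_piece_def f0_eq)

lemma mem_mor_piece:
  "w \<in> mor_piece (a,b) (p,q) \<longleftrightarrow> w \<in> (V a \<inter> V b) \<times> UNIV \<and> chart a (fst w) = p \<and> chart b (fst w) = q"
  by (cases w) (auto simp: mor_piece_def MorP_def f1_eq(1))

lemma h0_continuous: "continuous_map (ObjTop V) (ObjTop V) h0"
  unfolding ObjTop_eq h0_def
proof (rule continuous_map_sum_topology_piecewise)
  fix a j :: 'a
  show "open {w \<in> V a \<times> (UNIV :: 'g0 set). a = j}"
    by (cases "a = j") (simp_all add: open_Times open_V)
  have cover: "V a \<times> UNIV = (\<Union>i. obj_piece a i)" by (auto simp: mem_obj_piece)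
  have "continuous_on (obj_piece a i)
      (\<lambda>w. (fst w, cx (\<alpha> a) (chart a (fst w)) (fst w) + snd (snd (f0 (a,w)))))" for i
  proof -
    have "continuous_on (obj_piece a i) (\<lambda>w. (fst w, cx (\<alpha> a) i (fst w) + snd (snd (f0 (a,w)))))"
      by (intro continuous_intros continuous_on_cx_fst continuous_on_obj_piece)
        (auto simp: mem_obj_piece intro: mem_U_\<alpha> mem_U_chart)
    then show ?thesis by (rule continuous_on_cong[THEN iffD1, rotated 2]) (auto simp: mem_obj_piece)
  qed
  then have "continuous_on (\<Union>i. obj_piece a i)
      (\<lambda>w. (fst w, cx (\<alpha> a) (chart a (fst w)) (fst w) + snd (snd (f0 (a,w)))))"
    by (intro continuous_on_open_UN open_obj_piece)
  then have "continuous_on (V a \<times> UNIV)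
      (\<lambda>w. (fst w, cx (\<alpha> a) (chart a (fst w)) (fst w) + snd (snd (f0 (a,w)))))"
    by (simp only: cover)
  then show "continuous_on {w \<in> V a \<times> (UNIV :: 'g0 set). a = j}
      (\<lambda>w. (fst w, cx (\<alpha> a) (chart a (fst w)) (fst w) + snd (snd (f0 (a,w)))))"
    by (rule continuous_on_subset) auto
qed auto

lemma g0_continuous: "continuous_map (ObjTop V) (ObjTop U) g0"
  unfolding ObjTop_eq g0_def
proof (rule continuous_map_sum_topology_piecewise)
  fix a :: 'a and j :: 'i
  have "{w \<in> V a \<times> (UNIV :: 'g0 set). chart a (fst w) = j} = obj_piece a j"
    by (auto simp: mem_obj_piece)
  then show "open {w \<in> V a \<times> (UNIV :: 'g0 set). chart a (fst w) = j}"
    using open_obj_piece by simp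
  have "continuous_on {w \<in> V a \<times> (UNIV :: 'g0 set). chart a (fst w) = j}
      (\<lambda>w. (fst w, - cx (\<alpha> a) j (fst w) + snd w))"
    by (intro continuous_intros continuous_on_cx_fst) (auto intro: mem_U_\<alpha> mem_U_chart)
  then show "continuous_on {w \<in> V a \<times> (UNIV :: 'g0 set). chart a (fst w) = j}
      (\<lambda>w. (fst w, - cx (\<alpha> a) (chart a (fst w)) (fst w) + snd w))"
    by (rule continuous_on_cong[THEN iffD1, rotated 2]) auto
qed (auto intro: mem_U_chart)

lemma continuous_on_h1_shift: "continuous_on (mor_piece (a,b) (p,q)) (\<lambda>w. h1_shift (a,b) (fst w))"
proof -
  have "continuous_on (mor_piece (a,b) (p,q))
      (\<lambda>w. - ce (\<alpha> a) (\<alpha> b) q (fst w) + ce (\<alpha> a) p q (fst w) + u (cx (\<alpha> a) p (fst w)))"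
    by (intro continuous_intros continuous_on_cx_fst continuous_on_ce_fst continuous_on_u_comp)
      (auto simp: mem_mor_piece intro: mem_U_\<alpha> mem_U_chart)
  then show ?thesis
    by (rule continuous_on_cong[THEN iffD1, rotated 2]) (auto simp: mem_mor_piece h1_shift_def)
qed

lemma continuous_on_g1_shift: "continuous_on (mor_piece (a,b) (p,q)) (\<lambda>w. g1_shift (a,b) (fst w))"
proof -
  have "continuous_on (mor_piece (a,b) (p,q))
      (\<lambda>w. - u (cx (\<alpha> a) p (fst w)) + - ce (\<alpha> a) p q (fst w) + ce (\<alpha> a) (\<alpha> b) q (fst w))"
    by (intro continuous_intros continuous_on_cx_fst continuous_on_ce_fst continuous_on_u_comp)
      (auto simp: mem_mor_piece intro: mem_U_\<alpha> mem_U_chart)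
  then show ?thesis
    by (rule continuous_on_cong[THEN iffD1, rotated 2]) (auto simp: mem_mor_piece g1_shift_def)
qed

lemma h1_continuous: "continuous_map (MorTop V) (MorTop V) h1"
  unfolding MorTop_eq h1_def
proof (rule continuous_map_sum_topology_piecewise)
  fix ab j :: "'a \<times> 'a"
  obtain a b where ab: "ab = (a,b)" by fastforce
  show "open {w \<in> (V (fst ab) \<inter> V (snd ab)) \<times> (UNIV :: 'g1 set). ab = j}"
    by (cases "ab = j") (simp_all add: open_Times open_Int open_V)
  have cover: "(V a \<inter> V b) \<times> UNIV = (\<Union>pq. mor_piece (a,b) pq)"
    by (auto simp: mem_mor_piece)
  have "continuous_on (mor_piece (a,b) pq) (\<lambda>w. (fst w, h1_shift (a,b) (fst w) + snd (snd (f1 ((a,b),w)))))"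
    for pq
    using continuous_on_h1_shift[of a b "fst pq" "snd pq"]
    by (intro continuous_intros continuous_on_mor_piece) simp_all
  then have "continuous_on ((V a \<inter> V b) \<times> UNIV)
      (\<lambda>w. (fst w, h1_shift (a,b) (fst w) + snd (snd (f1 ((a,b),w)))))"
    unfolding cover by (intro continuous_on_open_UN open_mor_piece)
  then show "continuous_on {w \<in> (V (fst ab) \<inter> V (snd ab)) \<times> (UNIV :: 'g1 set). ab = j}
      (\<lambda>w. (fst w, h1_shift ab (fst w) + snd (snd (f1 (ab,w)))))"
    unfolding ab by (rule continuous_on_subset) auto
qed auto

lemma g1_continuous: "continuous_map (MorTop V) (MorTop U) g1"
  unfolding MorTop_eq g1_def
proof (rule continuous_map_sum_topology_piecewise)
  fix ab :: "'a \<times> 'a" and pq :: "'i \<times> 'i"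
  obtain a b p q where ab: "ab = (a,b)" and pq: "pq = (p,q)" by fastforce
  have piece: "{w \<in> (V (fst ab) \<inter> V (snd ab)) \<times> (UNIV :: 'g1 set).
      (chart (fst ab) (fst w), chart (snd ab) (fst w)) = pq} = mor_piece (a,b) (p,q)"
    by (auto simp: mem_mor_piece ab pq)
  show "open {w \<in> (V (fst ab) \<inter> V (snd ab)) \<times> (UNIV :: 'g1 set).
      (chart (fst ab) (fst w), chart (snd ab) (fst w)) = pq}"
    unfolding piece by (rule open_mor_piece)
  show "continuous_on {w \<in> (V (fst ab) \<inter> V (snd ab)) \<times> (UNIV :: 'g1 set).
      (chart (fst ab) (fst w), chart (snd ab) (fst w)) = pq} (\<lambda>w. (fst w, g1_shift ab (fst w) + snd w))"
    unfolding piece unfolding ab by (intro continuous_intros continuous_on_g1_shift)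
qed (auto intro: mem_U_chart)

lemma bundle_mor_h: "bundle_mor s t u V dx de V (restrX cx \<alpha>) (restrE ce \<alpha>) h0 h1"
  unfolding bundle_mor_def
proof (intro conjI ballI allI impI h0_continuous h1_continuous h_over_X h1_compP h1_identP h0_actO h1_actM)
  fix m :: "('a \<times> 'a) \<times> 'x \<times> 'g1"
  assume "m \<in> MorP V"
  then show "srcP s (h1 m) = h0 (srcP s m)" "tgtP t (restrX cx \<alpha>) (h1 m) = h0 (tgtP t dx m)"
    using h1_src_tgt by (metis prod.collapse)+
qed

lemma bundle_mor_g: "bundle_mor s t u V (restrX cx \<alpha>) (restrE ce \<alpha>) U cx ce g0 g1"
  unfolding bundle_mor_def
proof (intro conjI ballI allI impI g0_continuous g1_continuous g_over_X g1_compP g1_identP g0_actO g1_actM)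
  fix m :: "('a \<times> 'a) \<times> 'x \<times> 'g1"
  assume "m \<in> MorP V"
  then show "srcP s (g1 m) = g0 (srcP s m)" "tgtP t cx (g1 m) = g0 (tgtP t (restrX cx \<alpha>) m)"
    using g1_src_tgt by (metis prod.collapse)+
qed

end

theorem lemma8:
  fixes s t :: "'g1::topological_group_add \<Rightarrow> 'g0::topological_group_add"
    and u :: "'g0 \<Rightarrow> 'g1"
    and U :: "'i \<Rightarrow> 'x::topological_space set"
    and V :: "'a \<Rightarrow> 'x set"
    and cx :: "'i \<Rightarrow> 'i \<Rightarrow> 'x \<Rightarrow> 'g0" and ce :: "'i \<Rightarrow> 'i \<Rightarrow> 'i \<Rightarrow> 'x \<Rightarrow> 'g1"
    and dx :: "'a \<Rightarrow> 'a \<Rightarrow> 'x \<Rightarrow> 'g0" and de :: "'a \<Rightarrow> 'a \<Rightarrow> 'a \<Rightarrow> 'x \<Rightarrow> 'g1"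
    and f0 :: "'a \<times> ('x \<times> 'g0) \<Rightarrow> 'i \<times> ('x \<times> 'g0)"
    and f1 :: "('a \<times> 'a) \<times> ('x \<times> 'g1) \<Rightarrow> ('i \<times> 'i) \<times> ('x \<times> 'g1)"
  assumes "top_2group s t u"
    and "open_cover U" and "open_cover V"
    and "\<exists>\<beta>. refines V U \<beta>"
    and "cech_cocycle s t u U cx ce"
    and "cech_cocycle s t u V dx de"
    and "bundle_mor s t u V dx de U cx ce f0 f1"
  shows "\<exists>\<alpha> h0 h1 g0 g1. refines V U \<alpha> \<and>
           bundle_mor s t u V dx de V (restrX cx \<alpha>) (restrE ce \<alpha>) h0 h1 \<and>
           bundle_mor s t u V (restrX cx \<alpha>) (restrE ce \<alpha>) U cx ce g0 g1 \<and>
           (\<forall>p\<in>ObjP V. f0 p = g0 (h0 p)) \<and> (\<forall>m\<in>MorP V. f1 m = g1 (h1 m))"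
proof -
  obtain \<alpha> where \<alpha>: "refines V U \<alpha>" using assms(4) by blast
  interpret refined_bundle_mor s t u U V cx ce dx de f0 f1 \<alpha>
    by unfold_locales (use assms \<alpha> in auto)
  show ?thesis
    using \<alpha> bundle_mor_h bundle_mor_g f0_eq_g0_h0 f1_eq_g1_h1 by blast
qed

end
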